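(* Let $\nu\ge 0$ and $\alpha>-1$, and let $(P_n)_{n\in\mathbb{N}_0}$ be a sequence of real polynomials. The orthogonality conditions $$\int_0^\infty P_n(x)P_m(x)\,x^\alpha\rho_\nu(x)\,dx=\delta_{n,m},\qquad n,m\in\mathbb{N}_0,$$ hold if and only if the composition orthogonality conditions (composition orthogonality in the sense of Laguerre) $$\int_0^\infty t^\nu e^{-t}\,P_m(\theta)P_n(\theta)\{t^\alpha\}\,dt=\frac{\delta_{m,n}}{\Gamma(1+\alpha)},\qquad m,n\in\mathbb{N}_0,$$ hold. In other words, Prudnikov's orthogonal polynomials are exactly the polynomials that are compositionally orthogonal in the sense of Laguerre.
   Context: For $\nu\in\mathbb{R}$ and $x>0$, $\rho_\nu(x)=2x^{\nu/2}K_\nu(2\sqrt{x})$, where $K_\nu$ is the modified Bessel function of the second kind; equivalently $\rho_\nu(x)=\int_0^\infty t^{\nu-1}e^{-t-x/t}\,dt$. The differential operator $\theta$ is defined by $\theta=tDt$, i.e. $(\theta f)(t)=t\frac{d}{dt}\big(tf(t)\big)$. For a polynomial $P(x)=\sum_k p_kx^k$, $P(\theta)$ denotes the operator $\sum_k p_k\theta^k$, and $P_m(\theta)P_n(\theta)$ denotes the composition of these operators. Note that $\theta^j\{t^\alpha\}=(1+\alpha)_j\,t^{\alpha+j}$. Here $\delta_{n,m}$ is the Kronecker delta. *)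

theory Defs
  imports "HOL-Analysis.Analysis" "HOL-Computational_Algebra.Polynomial"
begin

text \<open>rho_nu(x) = integral over (0,inf) of t^(nu-1) e^(-t-x/t) dt (= 2 x^(nu/2) K_nu(2 sqrt x)).\<close>
definition rho :: "real \<Rightarrow> real \<Rightarrow> real" where
  "rho \<nu> x = (LBINT t:{0<..}. t powr (\<nu> - 1) * exp (- t - x / t))"

definition theta :: "(real \<Rightarrow> real) \<Rightarrow> real \<Rightarrow> real" where
  "theta f = (\<lambda>t. t * deriv (\<lambda>s. s * f s) t)"

definition poly_theta :: "real poly \<Rightarrow> (real \<Rightarrow> real) \<Rightarrow> real \<Rightarrow> real" where
  "poly_theta p f = (\<lambda>t. \<Sum>k\<le>degree p. coeff p k * (theta ^^ k) f t)"

end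

theory Submission
  imports Defs
begin

text \<open>
  Both integrals are bilinear in the coefficients \<open>p\<^sub>k, q\<^sub>j\<close> of the two polynomials and
  depend only on moments indexed by \<open>k + j\<close>. Since \<open>\<theta>{t^b} = (b + 1) t^(b + 1)\<close>, the function
  \<open>Q(\<theta>) P(\<theta>){t^\<alpha>}\<close> is \<open>\<Sum> p\<^sub>k q\<^sub>j (\<alpha> + 1)\<^sub>k\<^sub>+\<^sub>j t^(\<alpha> + k + j)\<close>, whose moments against
  \<open>t^\<nu> e^-t\<close> are \<open>(\<alpha> + 1)\<^sub>n \<Gamma>(\<nu> + \<alpha> + n + 1)\<close>. By Fubini, the moments of \<open>x^\<alpha> \<rho>\<^sub>\<nu>(x)\<close>
  are \<open>\<Gamma>(\<alpha> + n + 1) \<Gamma>(\<nu> + \<alpha> + n + 1)\<close>, and \<open>\<Gamma>(\<alpha> + n + 1) = \<Gamma>(\<alpha> + 1) (\<alpha> + 1)\<^sub>n\<close>.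
  So the first integral is \<open>\<Gamma>(1 + \<alpha>) > 0\<close> times the second.
\<close>

lemma theta_powr_sum:
  fixes f :: "real \<Rightarrow> real" and c b :: "'a \<Rightarrow> real"
  assumes f: "\<And>s. s > 0 \<Longrightarrow> f s = (\<Sum>k\<in>K. c k * s powr b k)" and t: "t > 0"
  shows "theta f t = (\<Sum>k\<in>K. c k * (b k + 1) * t powr (b k + 1))"
proof -
  have "eventually (\<lambda>s. s * f s = (\<Sum>k\<in>K. c k * s powr (b k + 1))) (nhds t)"
  proof -
    have "eventually (\<lambda>s. s \<in> {0<..}) (nhds t)"
      using t by (intro eventually_nhds_in_open) auto
    then show ?thesis
      by eventually_elim (simp add: f sum_distrib_left powr_add mult_ac)
  qed
  then have "deriv (\<lambda>s. s * f s) t = deriv (\<lambda>s. \<Sum>k\<in>K. c k * s powr (b k + 1)) t"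
    by (rule deriv_cong_ev) simp
  also have "\<dots> = (\<Sum>k\<in>K. c k * ((b k + 1) * t powr b k))"
    by (rule DERIV_imp_deriv)
      (use t in \<open>auto intro!: derivative_eq_intros simp: mult_ac\<close>)
  finally show ?thesis
    using t by (simp add: theta_def sum_distrib_left powr_add mult_ac)
qed

lemma funpow_theta_powr_sum:
  fixes f :: "real \<Rightarrow> real" and c b :: "'a \<Rightarrow> real"
  assumes f: "\<And>s. s > 0 \<Longrightarrow> f s = (\<Sum>k\<in>K. c k * s powr b k)" and t: "t > 0"
  shows "(theta ^^ j) f t = (\<Sum>k\<in>K. c k * pochhammer (b k + 1) j * t powr (b k + j))"
  using t
proof (induction j arbitrary: t)
  case 0
  then show ?case by (simp add: f)
next
  case (Suc j)
  have "(theta ^^ Suc j) f t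
      = (\<Sum>k\<in>K. c k * pochhammer (b k + 1) j * (b k + j + 1) * t powr (b k + j + 1))"
    unfolding funpow.simps o_apply by (rule theta_powr_sum) (use Suc in simp_all)
  then show ?case
    by (simp add: pochhammer_rec' algebra_simps)
qed

lemma poly_theta_powr:
  fixes \<alpha> :: real
  assumes "t > 0"
  shows "poly_theta p (\<lambda>s. s powr \<alpha>) t
       = (\<Sum>k\<le>degree p. coeff p k * pochhammer (\<alpha> + 1) k * t powr (\<alpha> + k))"
  unfolding poly_theta_def
  using funpow_theta_powr_sum[where f = "\<lambda>s. s powr \<alpha>" and K = "{()}" and c = "\<lambda>_. 1" and b = "\<lambda>_. \<alpha>"]
    assms
  by (simp add: mult_ac)

lemma poly_theta_poly_theta_powr:
  fixes \<alpha> :: real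
  assumes "t > 0"
  shows "poly_theta q (poly_theta p (\<lambda>s. s powr \<alpha>)) t
       = (\<Sum>k\<le>degree p. \<Sum>j\<le>degree q.
            coeff p k * coeff q j * (pochhammer (\<alpha> + 1) (k + j) * t powr (\<alpha> + real (k + j))))"
    (is "_ = ?rhs")
proof -
  have "poly_theta q (poly_theta p (\<lambda>s. s powr \<alpha>)) t
      = (\<Sum>j\<le>degree q. coeff q j * (\<Sum>k\<le>degree p.
           coeff p k * pochhammer (\<alpha> + 1) k * pochhammer (\<alpha> + k + 1) j * t powr (\<alpha> + k + j)))"
    using funpow_theta_powr_sum[OF poly_theta_powr assms]
    by (simp add: poly_theta_def[of q] mult_ac)
  also have "\<dots> = ?rhs"
    unfolding sum_distrib_left
    by (subst sum.swap) (intro sum.cong refl, simp add: pochhammer_product' algebra_simps)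
  finally show ?thesis .
qed

lemma nn_integral_powr_exp_Gamma:
  fixes e :: real
  assumes "e > -1"
  shows "(\<integral>\<^sup>+t. ennreal (indicator {0<..} t * (t powr e * exp (- t))) \<partial>lborel)
       = ennreal (Gamma (e + 1))"
proof -
  have "Gamma (e + 1) = (\<integral>\<^sup>+t. ennreal (indicator {0..} t * t powr (e + 1 - 1) / exp t) \<partial>lborel)"
    by (rule Gamma_conv_nn_integral_real) (use assms in simp)
  also have "\<dots> = (\<integral>\<^sup>+t. ennreal (indicator {0<..} t * (t powr e * exp (- t))) \<partial>lborel)"
    by (intro nn_integral_cong) (auto simp: indicator_def exp_minus field_simps)
  finally show ?thesis by simp
qed

lemma has_bochner_integral_powr_exp_Gamma:
  fixes e :: real
  assumes "e > -1"
  shows "has_bochner_integral lborel (\<lambda>t. indicator {0<..} t * (t powr e * exp (- t))) (Gamma (e + 1))"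
  using assms by (intro has_bochner_integral_nn_integral nn_integral_powr_exp_Gamma) auto

lemma nn_integral_powr_exp_divide:
  fixes a t :: real
  assumes a: "a > -1" and t: "t > 0"
  shows "(\<integral>\<^sup>+x. ennreal (indicator {0<..} x * (x powr a * exp (- (x / t)))) \<partial>lborel)
       = ennreal (t powr (a + 1) * Gamma (a + 1))"
proof -
  let ?g = "\<lambda>u. indicator {0<..} u * (u powr a * exp (- u))"
  have "(\<integral>\<^sup>+x. ennreal (indicator {0<..} x * (x powr a * exp (- (x / t)))) \<partial>lborel)
      = \<bar>t\<bar> * (\<integral>\<^sup>+u. ennreal (indicator {0<..} (0 + t * u)
          * ((0 + t * u) powr a * exp (- ((0 + t * u) / t)))) \<partial>lborel)"
    by (rule nn_integral_real_affine) (use t in auto)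
  also have "\<dots> = ennreal t * (\<integral>\<^sup>+u. ennreal (t powr a) * ennreal (?g u) \<partial>lborel)"
    using t by (intro arg_cong2[where f = "(*)"] nn_integral_cong)
      (auto simp: ennreal_mult[symmetric] powr_mult zero_less_mult_iff indicator_def)
  also have "\<dots> = ennreal t * ennreal (t powr a) * ennreal (Gamma (a + 1))"
    using a by (simp add: nn_integral_cmult nn_integral_powr_exp_Gamma mult.assoc)
  also have "\<dots> = ennreal (t powr (a + 1) * Gamma (a + 1))"
    using a t by (simp add: ennreal_mult[symmetric] powr_add mult_ac)
  finally show ?thesis .
qed

lemma rho_eq_nn_integral:
  "rho \<nu> x
     = enn2real (\<integral>\<^sup>+t. ennreal (indicator {0<..} t * (t powr (\<nu> - 1) * exp (- t - x / t))) \<partial>lborel)"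
  unfolding rho_def set_lebesgue_integral_def by (subst integral_eq_nn_integral) auto

lemma rho_nonneg: "rho \<nu> x \<ge> 0"
  by (simp add: rho_eq_nn_integral)

lemma borel_measurable_rho [measurable]: "rho \<nu> \<in> borel_measurable borel"
  unfolding rho_eq_nn_integral[abs_def]
  by (intro borel_measurable_enn2real lborel.borel_measurable_nn_integral) measurable

lemma nn_integral_rho_moment:
  fixes \<nu> a :: real
  assumes a: "a > -1" and \<nu>a: "\<nu> + a > -1"
  shows "(\<integral>\<^sup>+x. ennreal (indicator {0<..} x * (x powr a * rho \<nu> x)) \<partial>lborel)
       = ennreal (Gamma (a + 1) * Gamma (\<nu> + a + 1))"
proof -
  define J where
    "J x = (\<integral>\<^sup>+t. ennreal (indicator {0<..} t * (t powr (\<nu> - 1) * exp (- t - x / t))) \<partial>lborel)" for x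
  define F where "F x t = ennreal (indicator {0<..} x * x powr a)
      * ennreal (indicator {0<..} t * (t powr (\<nu> - 1) * exp (- t - x / t)))" for x t
  have F_measurable [measurable]: "case_prod F \<in> borel_measurable (lborel \<Otimes>\<^sub>M lborel)"
    unfolding F_def by measurable
  have F_in_t: "(\<integral>\<^sup>+t. F x t \<partial>lborel) = ennreal (indicator {0<..} x * x powr a) * J x" for x
    unfolding F_def J_def by (rule nn_integral_cmult) measurable
  have F_in_x: "(\<integral>\<^sup>+x. F x t \<partial>lborel)
      = ennreal (Gamma (a + 1)) * ennreal (indicator {0<..} t * (t powr (\<nu> + a) * exp (- t)))" for t
  proof (cases "t > 0")
    case True
    have exp_split: "exp (- t - x / t) = exp (- t) * exp (- (x / t))" for x
      by (simp flip: exp_add)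
    have "(\<integral>\<^sup>+x. F x t \<partial>lborel) = (\<integral>\<^sup>+x. ennreal (t powr (\<nu> - 1) * exp (- t))
        * ennreal (indicator {0<..} x * (x powr a * exp (- (x / t)))) \<partial>lborel)"
      using True by (intro nn_integral_cong)
        (auto simp: F_def indicator_def ennreal_mult[symmetric] exp_split mult_ac)
    also have "\<dots> = ennreal (t powr (\<nu> - 1) * exp (- t)) * ennreal (t powr (a + 1) * Gamma (a + 1))"
      using a True by (simp add: nn_integral_cmult nn_integral_powr_exp_divide)
    also have "\<dots> = ennreal (Gamma (a + 1)) * ennreal (t powr (\<nu> + a) * exp (- t))"
      using a True by (simp add: ennreal_mult[symmetric] powr_add[symmetric] mult_ac)
    finally show ?thesis
      using True by simp
  qed (simp add: F_def)
  have total: "(\<integral>\<^sup>+x. \<integral>\<^sup>+t. F x t \<partial>lborel \<partial>lborel)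
      = ennreal (Gamma (a + 1) * Gamma (\<nu> + a + 1))"
  proof -
    have "(\<integral>\<^sup>+x. \<integral>\<^sup>+t. F x t \<partial>lborel \<partial>lborel) = (\<integral>\<^sup>+t. \<integral>\<^sup>+x. F x t \<partial>lborel \<partial>lborel)"
      by (rule lborel_pair.Fubini'[symmetric]) simp
    also have "\<dots> = ennreal (Gamma (a + 1)) * ennreal (Gamma (\<nu> + a + 1))"
      using \<nu>a by (simp add: F_in_x nn_integral_cmult nn_integral_powr_exp_Gamma)
    finally show ?thesis
      using a \<nu>a by (simp add: ennreal_mult)
  qed
  have "AE x in lborel. (\<integral>\<^sup>+t. F x t \<partial>lborel) \<noteq> \<infinity>"
    by (rule nn_integral_PInf_AE) (simp_all add: total)
  \<comment> \<open>\<open>rho \<nu> x = enn2real (J x)\<close> recovers \<open>J x\<close> only where \<open>J x\<close> is finite, i.e. almost everywhere\<close>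
  then have "AE x in lborel.
      ennreal (indicator {0<..} x * (x powr a * rho \<nu> x)) = (\<integral>\<^sup>+t. F x t \<partial>lborel)"
  proof eventually_elim
    case (elim x)
    show ?case
    proof (cases "x > 0")
      case True
      then have "J x \<noteq> \<infinity>"
        using elim by (simp add: F_in_t ennreal_mult_eq_top_iff)
      then have "ennreal (rho \<nu> x) = J x"
        by (simp add: rho_eq_nn_integral J_def less_top)
      then show ?thesis
        using True by (simp add: F_in_t ennreal_mult rho_nonneg)
    qed (simp add: F_in_t)
  qed
  then show ?thesis
    by (simp add: nn_integral_cong_AE total)
qed

lemma has_bochner_integral_rho_moment:
  fixes \<nu> a :: real
  assumes "a > -1" and "\<nu> + a > -1"
  shows "has_bochner_integral lborel (\<lambda>x. indicator {0<..} x * (x powr a * rho \<nu> x))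
           (Gamma (a + 1) * Gamma (\<nu> + a + 1))"
  using assms by (intro has_bochner_integral_nn_integral nn_integral_rho_moment) (auto simp: rho_nonneg)

lemma set_integral_double_sum_diagonal:
  fixes f :: "real \<Rightarrow> real" and g :: "nat \<Rightarrow> real \<Rightarrow> real" and M :: "nat \<Rightarrow> real"
  assumes g: "\<And>n. has_bochner_integral lborel (\<lambda>x. indicator A x * g n x) (M n)"
    and f: "\<And>x. x \<in> A \<Longrightarrow> f x = (\<Sum>k\<le>a. \<Sum>j\<le>b. c k j * g (k + j) x)"
  shows "(LBINT x:A. f x) = (\<Sum>k\<le>a. \<Sum>j\<le>b. c k j * M (k + j))"
proof -
  have "has_bochner_integral lborel (\<lambda>x. \<Sum>k\<le>a. \<Sum>j\<le>b. c k j * (indicator A x * g (k + j) x))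
      (\<Sum>k\<le>a. \<Sum>j\<le>b. c k j * M (k + j))"
    by (intro has_bochner_integral_sum has_bochner_integral_mult_right g)
  moreover have "(\<lambda>x. \<Sum>k\<le>a. \<Sum>j\<le>b. c k j * (indicator A x * g (k + j) x))
      = (\<lambda>x. indicator A x *\<^sub>R f x)"
    by (auto simp: f indicator_def)
  ultimately show ?thesis
    unfolding set_lebesgue_integral_def by (simp add: has_bochner_integral_integral_eq)
qed

lemma poly_mult_poly_eq_double_sum:
  fixes x :: "'a :: comm_semiring_1"
  shows "poly p x * poly q x
       = (\<Sum>k\<le>degree p. \<Sum>j\<le>degree q. coeff p k * coeff q j * x ^ (k + j))"
  unfolding poly_altdef sum_product by (simp add: power_add mult_ac)

lemma rho_weighted_integral_poly_mult:
  fixes \<nu> \<alpha> :: real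
  assumes "\<alpha> > -1" and "\<nu> + \<alpha> > -1"
  shows "(LBINT x:{0<..}. poly p x * poly q x * x powr \<alpha> * rho \<nu> x)
       = (\<Sum>k\<le>degree p. \<Sum>j\<le>degree q. coeff p k * coeff q j *
            (Gamma (\<alpha> + real (k + j) + 1) * Gamma (\<nu> + \<alpha> + real (k + j) + 1)))"
proof (rule set_integral_double_sum_diagonal)
  show "has_bochner_integral lborel (\<lambda>x. indicator {0<..} x * (x powr (\<alpha> + n) * rho \<nu> x))
          (Gamma (\<alpha> + real n + 1) * Gamma (\<nu> + \<alpha> + real n + 1))" for n
    using has_bochner_integral_rho_moment[of "\<alpha> + n" \<nu>] assms by (simp add: add_ac)
  show "poly p x * poly q x * x powr \<alpha> * rho \<nu> x
      = (\<Sum>k\<le>degree p. \<Sum>j\<le>degree q. coeff p k * coeff q j * (x powr (\<alpha> + real (k + j)) * rho \<nu> x))"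
    if "x \<in> {0<..}" for x
    using that
    by (simp add: poly_mult_poly_eq_double_sum sum_distrib_left sum_distrib_right
        powr_add powr_realpow power_add mult_ac)
qed

lemma composition_integral_poly_theta:
  fixes \<nu> \<alpha> :: real
  assumes "\<nu> + \<alpha> > -1"
  shows "(LBINT t:{0<..}. t powr \<nu> * exp (- t) * poly_theta q (poly_theta p (\<lambda>s. s powr \<alpha>)) t)
       = (\<Sum>k\<le>degree p. \<Sum>j\<le>degree q. coeff p k * coeff q j *
            (pochhammer (\<alpha> + 1) (k + j) * Gamma (\<nu> + \<alpha> + real (k + j) + 1)))"
proof (rule set_integral_double_sum_diagonal)
  show "has_bochner_integral lborel
          (\<lambda>t. indicator {0<..} t * (pochhammer (\<alpha> + 1) n * (t powr (\<nu> + \<alpha> + n) * exp (- t))))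
          (pochhammer (\<alpha> + 1) n * Gamma (\<nu> + \<alpha> + real n + 1))" for n
    using has_bochner_integral_powr_exp_Gamma[of "\<nu> + \<alpha> + n"] assms
    by (simp add: has_bochner_integral_mult_right mult.left_commute[of _ "pochhammer _ _"])
  show "t powr \<nu> * exp (- t) * poly_theta q (poly_theta p (\<lambda>s. s powr \<alpha>)) t
      = (\<Sum>k\<le>degree p. \<Sum>j\<le>degree q. coeff p k * coeff q j *
           (pochhammer (\<alpha> + 1) (k + j) * (t powr (\<nu> + \<alpha> + real (k + j)) * exp (- t))))"
    if "t \<in> {0<..}" for t
    using that by (simp add: poly_theta_poly_theta_powr sum_distrib_left powr_add mult_ac)
qed

lemma Gamma_add_of_nat:
  fixes z :: "'a :: Gamma"
  assumes "z \<notin> \<int>\<^sub>\<le>\<^sub>0"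
  shows "Gamma (z + of_nat n) = Gamma z * pochhammer z n"
  using assms by (simp add: pochhammer_Gamma Gamma_eq_zero_iff)

lemma rho_weighted_integral_eq_Gamma_mult_composition_integral:
  fixes \<nu> \<alpha> :: real
  assumes "\<alpha> > -1" and "\<nu> + \<alpha> > -1"
  shows "(LBINT x:{0<..}. poly p x * poly q x * x powr \<alpha> * rho \<nu> x)
       = Gamma (1 + \<alpha>) *
         (LBINT t:{0<..}. t powr \<nu> * exp (- t) * poly_theta q (poly_theta p (\<lambda>s. s powr \<alpha>)) t)"
proof -
  have "\<alpha> + 1 \<notin> \<int>\<^sub>\<le>\<^sub>0"
    using assms(1) by (auto elim!: nonpos_Ints_cases)
  then have Gamma_shift: "Gamma (\<alpha> + real n + 1) = Gamma (1 + \<alpha>) * pochhammer (\<alpha> + 1) n" for n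
    using Gamma_add_of_nat[of "\<alpha> + 1" n] by (simp add: add_ac)
  show ?thesis
    unfolding rho_weighted_integral_poly_mult[OF assms] composition_integral_poly_theta[OF assms(2)]
      Gamma_shift
    by (simp add: sum_distrib_left mult_ac)
qed

theorem theorem1:
  fixes \<nu> \<alpha> :: real and P :: "nat \<Rightarrow> real poly"
  assumes "\<nu> \<ge> 0" and "\<alpha> > -1"
  shows "(\<forall>n m. (LBINT x:{0<..}. poly (P n) x * poly (P m) x * x powr \<alpha> * rho \<nu> x)
              = (if n = m then 1 else 0))
     \<longleftrightarrow>
         (\<forall>m n. (LBINT t:{0<..}. t powr \<nu> * exp (- t) *
                   poly_theta (P m) (poly_theta (P n) (\<lambda>s. s powr \<alpha>)) t)
              = (if m = n then 1 else 0) / Gamma (1 + \<alpha>))"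
proof -
  have "\<nu> + \<alpha> > -1"
    using assms by linarith
  note integrals_eq = rho_weighted_integral_eq_Gamma_mult_composition_integral[OF \<open>\<alpha> > -1\<close> this]
  have Gamma_pos: "Gamma (1 + \<alpha>) > 0"
    using assms by simp
  have "(LBINT x:{0<..}. poly (P n) x * poly (P m) x * x powr \<alpha> * rho \<nu> x) = (if n = m then 1 else 0)
      \<longleftrightarrow> (LBINT t:{0<..}. t powr \<nu> * exp (- t) *
            poly_theta (P m) (poly_theta (P n) (\<lambda>s. s powr \<alpha>)) t)
          = (if m = n then 1 else 0) / Gamma (1 + \<alpha>)" for n m
    unfolding integrals_eq
    using Gamma_pos by (auto simp: eq_divide_eq mult.commute)
  then show ?thesis
    by blast
qed

end
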